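(* Let $G$ be either (i) $K_n-M$ where $n\geq 4$ is even and $M$ is a perfect matching of $K_n$, or (ii) $K_{n,n}-M$ where $n\geq 3$ and $M$ is a perfect matching of $K_{n,n}$. Suppose $G$ is edge-reconstructable (so that $ern(G)$ is defined). Then $ern(G)\geq 3$.
   Context: All graphs are finite and simple; $K-M$ denotes the graph on $V(K)$ with edge set $E(K)\setminus M$. For a graph $G$ and $e\in E(G)$, the unlabeled graph $G-e$ is an edge-card of $G$; the edge-deck $\mathcal{ED}(G)$ is the multiset of all edge-cards $G-e$, $e\in E(G)$ (taken up to isomorphism). For a sub-multiset $S\subseteq\mathcal{ED}(G)$, a blocker of $S$ is a graph $H\not\cong G$ such that $S\subseteq\mathcal{ED}(H)$ as multisets. $G$ is reconstructable from $S$ if $S$ has no blocker; $G$ is edge-reconstructable if it is reconstructable from $\mathcal{ED}(G)$. For such $G$, the edge reconstruction number $ern(G)$ is the minimum size of a sub-multiset $S\subseteq\mathcal{ED}(G)$ from which $G$ is reconstructable. *)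

theory Defs
  imports Main "HOL-Library.Multiset"
begin

text \<open>Finite simple graphs with vertices drawn from nat: a pair (V, E) of a finite
vertex set and a set of 2-element subsets of V.  Every finite simple graph is
isomorphic to one of this form, so unlabeled graphs are handled via isomorphism.\<close>

type_synonym graph = "nat set \<times> nat set set"

definition wf_graph :: "graph \<Rightarrow> bool" where
  "wf_graph G \<longleftrightarrow> finite (fst G) \<and> (\<forall>e\<in>snd G. e \<subseteq> fst G \<and> card e = 2)"

definition graph_iso :: "graph \<Rightarrow> graph \<Rightarrow> bool" where
  "graph_iso G H \<longleftrightarrow> (\<exists>f. bij_betw f (fst G) (fst H) \<and> (\<lambda>e. f ` e) ` snd G = snd H)"

definition iso_class :: "graph \<Rightarrow> graph set" where
  "iso_class G = {H. wf_graph H \<and> graph_iso G H}"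

definition edge_delete :: "graph \<Rightarrow> nat set \<Rightarrow> graph" where
  "edge_delete G e = (fst G, snd G - {e})"

definition graph_minus :: "graph \<Rightarrow> nat set set \<Rightarrow> graph" where
  "graph_minus K M = (fst K, snd K - M)"

definition edge_deck :: "graph \<Rightarrow> graph set multiset" where
  "edge_deck G = image_mset (\<lambda>e. iso_class (edge_delete G e)) (mset_set (snd G))"

definition is_blocker :: "graph \<Rightarrow> graph set multiset \<Rightarrow> graph \<Rightarrow> bool" where
  "is_blocker G S H \<longleftrightarrow> wf_graph H \<and> \<not> graph_iso H G \<and> S \<subseteq># edge_deck H"

definition reconstructable_from :: "graph \<Rightarrow> graph set multiset \<Rightarrow> bool" where
  "reconstructable_from G S \<longleftrightarrow> \<not> (\<exists>H. is_blocker G S H)"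

definition edge_reconstructable :: "graph \<Rightarrow> bool" where
  "edge_reconstructable G \<longleftrightarrow> reconstructable_from G (edge_deck G)"

definition ern :: "graph \<Rightarrow> nat" where
  "ern G = (LEAST k. \<exists>S. S \<subseteq># edge_deck G \<and> size S = k \<and> reconstructable_from G S)"

definition complete_graph :: "nat set \<Rightarrow> graph" where
  "complete_graph V = (V, {e. e \<subseteq> V \<and> card e = 2})"

definition complete_bipartite :: "nat \<Rightarrow> graph" where
  "complete_bipartite n = ({0..<2*n}, {{a, b} | a b. a < n \<and> n \<le> b \<and> b < 2*n})"

definition perfect_matching :: "graph \<Rightarrow> nat set set \<Rightarrow> bool" where
  "perfect_matching K M \<longleftrightarrow> M \<subseteq> snd K \<and> (\<forall>v\<in>fst K. \<exists>!e. e \<in> M \<and> v \<in> e)"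

end

theory Submission
  imports Defs "HOL-Combinatorics.Transposition"
begin

text \<open>All edge-cards of \<open>G = K - M\<close> are isomorphic: the automorphisms of \<open>K\<close> that commute
with the matching involution \<open>x \<mapsto> x'\<close> act transitively on the edges of \<open>G\<close>. So a sub-multiset
of at most two cards consists of copies of the single card \<open>C = G - ab\<close>. With \<open>a'\<close> the mate of
\<open>a\<close>, the graph \<open>H = G - ab + aa'\<close> satisfies \<open>H - aa' = G - ab\<close> and \<open>H - a'b' \<cong> G - ab\<close> (via the
transposition of \<open>a\<close> and \<open>b'\<close>), but \<open>H \<not>\<cong> G\<close>: the vertex \<open>a'\<close> has full \<open>K\<close>-degree in \<open>H\<close>,
whereas \<open>G\<close> is regular of degree one less. Hence \<open>H\<close> blocks every such sub-multiset.\<close>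

section \<open>Isomorphisms, automorphisms and degrees\<close>

lemma wf_graph_edgeE:
  assumes "wf_graph G" "e \<in> snd G"
  obtains x y where "e = {x, y}" "x \<noteq> y" "x \<in> fst G" "y \<in> fst G"
proof -
  have "e \<subseteq> fst G" "card e = 2" using assms unfolding wf_graph_def by auto
  then show ?thesis using that unfolding card_2_iff by blast
qed

lemma finite_edges: "wf_graph G \<Longrightarrow> finite (snd G)"
  unfolding wf_graph_def by (meson PowI finite_Pow_iff finite_subset subsetI)

lemma wf_graph_edge_delete: "wf_graph G \<Longrightarrow> wf_graph (edge_delete G e)"
  unfolding wf_graph_def edge_delete_def by auto

lemma graph_iso_refl: "graph_iso G G"
  unfolding graph_iso_def by (rule exI[of _ id]) auto

lemma graph_iso_trans:
  assumes "graph_iso A B" "graph_iso B C"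
  shows "graph_iso A C"
proof -
  obtain f where f: "bij_betw f (fst A) (fst B)" "(\<lambda>e. f ` e) ` snd A = snd B"
    using assms(1) unfolding graph_iso_def by blast
  obtain g where g: "bij_betw g (fst B) (fst C)" "(\<lambda>e. g ` e) ` snd B = snd C"
    using assms(2) unfolding graph_iso_def by blast
  have "(\<lambda>e. (g \<circ> f) ` e) ` snd A = snd C"
    unfolding g(2)[symmetric] f(2)[symmetric] by (simp add: image_image image_comp)
  then show ?thesis
    unfolding graph_iso_def using bij_betw_trans[OF f(1) g(1)] by blast
qed

lemma graph_iso_sym:
  assumes "wf_graph A" "graph_iso A B"
  shows "graph_iso B A"
proof -
  obtain f where f: "bij_betw f (fst A) (fst B)" "(\<lambda>e. f ` e) ` snd A = snd B"
    using assms(2) unfolding graph_iso_def by blast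
  have inj: "inj_on f (fst A)" using f(1) bij_betw_def by blast
  have "(\<lambda>e. inv_into (fst A) f ` e) ` snd B = (\<lambda>e. inv_into (fst A) f ` f ` e) ` snd A"
    unfolding f(2)[symmetric] by (rule image_image)
  also have "\<dots> = snd A"
    using inv_into_image_cancel[OF inj] assms(1) unfolding wf_graph_def by simp
  finally show ?thesis
    unfolding graph_iso_def using bij_betw_inv_into[OF f(1)] by blast
qed

lemma iso_class_eq:
  "wf_graph A \<Longrightarrow> wf_graph B \<Longrightarrow> graph_iso A B \<Longrightarrow> iso_class A = iso_class B"
  unfolding iso_class_def using graph_iso_sym graph_iso_trans by blast

lemma graph_iso_adjacent_iff:
  assumes "wf_graph A" "bij_betw f (fst A) (fst B)" "(\<lambda>e. f ` e) ` snd A = snd B"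
    and "x \<in> fst A" "y \<in> fst A"
  shows "{f x, f y} \<in> snd B \<longleftrightarrow> {x, y} \<in> snd A"
proof
  assume "{f x, f y} \<in> snd B"
  then obtain e where e: "e \<in> snd A" "f ` e = f ` {x, y}"
    using assms(3) by (metis image_empty image_iff image_insert)
  have inj: "inj_on f (fst A)" using assms(2) unfolding bij_betw_def by blast
  have "e \<subseteq> fst A" using assms(1) e(1) unfolding wf_graph_def by blast
  moreover have "{x, y} \<subseteq> fst A" using assms(4,5) by simp
  ultimately have "e = {x, y}" using e(2) inj_on_image_eq_iff[OF inj] by blast
  then show "{x, y} \<in> snd A" using e by simp
next
  assume "{x, y} \<in> snd A"
  then have "f ` {x, y} \<in> snd B" using assms(3) by blast
  then show "{f x, f y} \<in> snd B" by simp
qed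

lemma graph_iso_by_adjacency:
  assumes "wf_graph A" "wf_graph B" and f: "bij_betw f (fst A) (fst B)"
    and adj: "\<And>x y. x \<in> fst A \<Longrightarrow> y \<in> fst A \<Longrightarrow> {f x, f y} \<in> snd B \<longleftrightarrow> {x, y} \<in> snd A"
  shows "graph_iso A B"
proof -
  have "(\<lambda>e. f ` e) ` snd A = snd B"
  proof (intro equalityI subsetI)
    fix e' assume "e' \<in> (\<lambda>e. f ` e) ` snd A"
    then obtain e where e: "e \<in> snd A" "e' = f ` e" by blast
    then obtain x y where "e = {x, y}" "x \<in> fst A" "y \<in> fst A"
      using wf_graph_edgeE[OF assms(1)] by metis
    then show "e' \<in> snd B" using adj e by auto
  next
    fix e' assume e': "e' \<in> snd B"
    then obtain u v where uv: "e' = {u, v}" "u \<in> fst B" "v \<in> fst B"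
      by (auto elim: wf_graph_edgeE[OF assms(2)])
    then obtain x y where "x \<in> fst A" "y \<in> fst A" "u = f x" "v = f y"
      using f unfolding bij_betw_def by blast
    then show "e' \<in> (\<lambda>e. f ` e) ` snd A" using adj e' uv by (intro image_eqI[of _ _ "{x, y}"]) auto
  qed
  then show ?thesis unfolding graph_iso_def using f by blast
qed

lemma graph_iso_edge_delete:
  assumes "wf_graph A" "bij_betw f (fst A) (fst B)" "(\<lambda>e. f ` e) ` snd A = snd B"
    and "e \<in> snd A"
  shows "graph_iso (edge_delete A e) (edge_delete B (f ` e))"
proof -
  have inj: "inj_on f (fst A)" using assms(2) bij_betw_def by blast
  have "inj_on (\<lambda>e. f ` e) (snd A)"
  proof (rule inj_onI)
    fix e1 e2 assume "e1 \<in> snd A" "e2 \<in> snd A" "f ` e1 = f ` e2"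
    then show "e1 = e2" using inj_on_image_eq_iff[OF inj] assms(1) unfolding wf_graph_def by blast
  qed
  then have "(\<lambda>e. f ` e) ` (snd A - {e}) = snd B - {f ` e}"
    using assms(3,4) by (simp add: inj_on_image_set_diff)
  then show ?thesis
    unfolding graph_iso_def edge_delete_def using assms(2) by auto
qed

definition graph_aut :: "graph \<Rightarrow> (nat \<Rightarrow> nat) \<Rightarrow> bool" where
  "graph_aut G s \<longleftrightarrow> bij_betw s (fst G) (fst G)
     \<and> (\<forall>x\<in>fst G. \<forall>y\<in>fst G. {s x, s y} \<in> snd G \<longleftrightarrow> {x, y} \<in> snd G)"

lemma graph_aut_edge_delete:
  assumes G: "wf_graph G" and s: "graph_aut G s" and "a \<in> fst G" "b \<in> fst G"
  shows "graph_iso (edge_delete G {a, b}) (edge_delete G {s a, s b})"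
proof (rule graph_iso_by_adjacency[OF wf_graph_edge_delete[OF G] wf_graph_edge_delete[OF G]])
  have bij: "bij_betw s (fst G) (fst G)" using s unfolding graph_aut_def by blast
  then show "bij_betw s (fst (edge_delete G {a, b})) (fst (edge_delete G {s a, s b}))"
    unfolding edge_delete_def by simp
  fix x y assume "x \<in> fst (edge_delete G {a, b})" "y \<in> fst (edge_delete G {a, b})"
  then have xy: "x \<in> fst G" "y \<in> fst G" unfolding edge_delete_def by auto
  have "s ` {x, y} = s ` {a, b} \<longleftrightarrow> {x, y} = {a, b}"
    using bij xy assms(3,4) by (intro inj_on_image_eq_iff) (auto simp: bij_betw_def)
  then show "{s x, s y} \<in> snd (edge_delete G {s a, s b}) \<longleftrightarrow> {x, y} \<in> snd (edge_delete G {a, b})"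
    using s xy unfolding edge_delete_def graph_aut_def by auto
qed

definition neighbours :: "graph \<Rightarrow> nat \<Rightarrow> nat set" where
  "neighbours G x = {y. {x, y} \<in> snd G}"

definition regular :: "graph \<Rightarrow> bool" where
  "regular G \<longleftrightarrow> (\<forall>x\<in>fst G. \<forall>y\<in>fst G. card (neighbours G x) = card (neighbours G y))"

lemma neighbours_subset: "wf_graph G \<Longrightarrow> neighbours G x \<subseteq> fst G"
  unfolding neighbours_def wf_graph_def by blast

lemma finite_neighbours: "wf_graph G \<Longrightarrow> finite (neighbours G x)"
  using finite_subset[OF neighbours_subset] unfolding wf_graph_def by blast

lemma graph_iso_card_neighbours:
  assumes A: "wf_graph A" and B: "wf_graph B"
    and f: "bij_betw f (fst A) (fst B)" "(\<lambda>e. f ` e) ` snd A = snd B" and x: "x \<in> fst A"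
  shows "card (neighbours B (f x)) = card (neighbours A x)"
proof -
  have image: "f ` neighbours A x = neighbours B (f x)"
  proof (intro equalityI subsetI)
    fix z assume "z \<in> f ` neighbours A x"
    then obtain y where y: "{x, y} \<in> snd A" "z = f y" unfolding neighbours_def by blast
    then have "y \<in> fst A" using neighbours_subset[OF A] unfolding neighbours_def by blast
    then show "z \<in> neighbours B (f x)"
      using y graph_iso_adjacent_iff[OF A f x] unfolding neighbours_def by simp
  next
    fix z assume z: "z \<in> neighbours B (f x)"
    then have "z \<in> f ` fst A" using neighbours_subset[OF B] f(1) unfolding bij_betw_def by blast
    then obtain y where y: "y \<in> fst A" "z = f y" by blast
    then show "z \<in> f ` neighbours A x"
      using z graph_iso_adjacent_iff[OF A f x y(1)] unfolding neighbours_def by simp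
  qed
  have "inj_on f (neighbours A x)"
    using inj_on_subset[OF bij_betw_imp_inj_on[OF f(1)] neighbours_subset[OF A]] .
  from card_image[OF this] show ?thesis unfolding image .
qed

section \<open>Edge-cards and the reconstruction number\<close>

lemma edge_deck_eq_replicate:
  assumes G: "wf_graph G" and C: "wf_graph C"
    and cards: "\<And>e. e \<in> snd G \<Longrightarrow> graph_iso (edge_delete G e) C"
  shows "edge_deck G = replicate_mset (card (snd G)) (iso_class C)"
proof -
  have "iso_class (edge_delete G e) = iso_class C" if "e \<in># mset_set (snd G)" for e
    using that finite_edges[OF G] cards iso_class_eq[OF wf_graph_edge_delete[OF G] C] by simp
  then have "edge_deck G = image_mset (\<lambda>_. iso_class C) (mset_set (snd G))"
    unfolding edge_deck_def by (rule image_mset_cong)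
  then show ?thesis by (simp add: image_mset_const_eq)
qed

lemma replicate_subseteq_edge_deck:
  assumes H: "wf_graph H" and C: "wf_graph C"
    and "h1 \<noteq> h2" "h1 \<in> snd H" "h2 \<in> snd H"
    and "graph_iso (edge_delete H h1) C" "graph_iso (edge_delete H h2) C"
  shows "replicate_mset 2 (iso_class C) \<subseteq># edge_deck H"
proof -
  have "mset_set {h1, h2} \<subseteq># mset_set (snd H)"
    using assms(3-5) finite_edges[OF H] by (intro subset_imp_msubset_mset_set) auto
  then have "image_mset (\<lambda>e. iso_class (edge_delete H e)) (mset_set {h1, h2}) \<subseteq># edge_deck H"
    unfolding edge_deck_def by (rule image_mset_subseteq_mono)
  moreover have "iso_class (edge_delete H h1) = iso_class C" "iso_class (edge_delete H h2) = iso_class C"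
    using iso_class_eq[OF wf_graph_edge_delete[OF H] C] assms(6,7) by blast+
  ultimately show ?thesis using assms(3) by (simp add: numeral_2_eq_2)
qed

lemma three_le_ern_if_pair_blocked:
  assumes G: "wf_graph G" "edge_reconstructable G" and C: "wf_graph C"
    and cards: "\<And>e. e \<in> snd G \<Longrightarrow> graph_iso (edge_delete G e) C"
    and blocked: "is_blocker G (replicate_mset 2 (iso_class C)) H"
  shows "3 \<le> ern G"
proof -
  have small_not_reconstructing: "\<not> reconstructable_from G S" if "S \<subseteq># edge_deck G" "size S < 3" for S
  proof -
    have "S \<subseteq># replicate_mset (card (snd G)) (iso_class C)"
      using that(1) edge_deck_eq_replicate[OF G(1) C cards] by simp
    then obtain m where "S = replicate_mset m (iso_class C)" by (rule msubseteq_replicate_msetE)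
    then have "S \<subseteq># replicate_mset 2 (iso_class C)"
      using that(2) by (simp add: replicate_mset_msubseteq_iff)
    then have "is_blocker G S H"
      using blocked subset_mset.trans unfolding is_blocker_def by blast
    then show ?thesis unfolding reconstructable_from_def by blast
  qed
  have "\<exists>S. S \<subseteq># edge_deck G \<and> size S = size (edge_deck G) \<and> reconstructable_from G S"
    using G(2) unfolding edge_reconstructable_def by blast
  then have "\<exists>S. S \<subseteq># edge_deck G \<and> size S = ern G \<and> reconstructable_from G S"
    unfolding ern_def by (rule LeastI)
  then obtain S where S: "S \<subseteq># edge_deck G" "size S = ern G" "reconstructable_from G S" by blast
  show ?thesis
  proof (rule ccontr)
    assume "\<not> 3 \<le> ern G"
    then show False using small_not_reconstructing[OF S(1)] S(2,3) by simp
  qed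
qed

section \<open>Removing a perfect matching\<close>

lemma wf_graph_minus: "wf_graph K \<Longrightarrow> wf_graph (graph_minus K M)"
  unfolding wf_graph_def graph_minus_def by auto

locale matching_complement =
  fixes K :: graph and M :: "nat set set"
  assumes wf_K: "wf_graph K" and perfect: "perfect_matching K M"
begin

abbreviation V :: "nat set" where "V \<equiv> fst K"

definition mate :: "nat \<Rightarrow> nat" where
  "mate x = (THE y. {x, y} \<in> M)"

lemma in_matching_iff:
  assumes x: "x \<in> V"
  shows "{x, y} \<in> M \<longleftrightarrow> y = mate x"
proof -
  obtain e where e: "e \<in> M" "x \<in> e" and uniq: "\<And>e'. e' \<in> M \<Longrightarrow> x \<in> e' \<Longrightarrow> e' = e"
    using perfect x unfolding perfect_matching_def by blast
  have "e \<in> snd K" using e(1) perfect unfolding perfect_matching_def by blast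
  then obtain u v where uv: "e = {u, v}" "u \<noteq> v" using wf_graph_edgeE[OF wf_K] by metis
  define z where "z = (if x = u then v else u)"
  have z: "e = {x, z}" "z \<noteq> x" using uv e(2) unfolding z_def by auto
  have "{x, y} \<in> M \<longleftrightarrow> y = z" for y
    using uniq[of "{x, y}"] e z by (auto simp: doubleton_eq_iff)
  then show ?thesis unfolding mate_def by simp
qed

lemma mate_in_matching: "x \<in> V \<Longrightarrow> {x, mate x} \<in> M"
  using in_matching_iff by blast

lemma adjacent_mate: "x \<in> V \<Longrightarrow> {x, mate x} \<in> snd K"
  using mate_in_matching perfect unfolding perfect_matching_def by blast

lemma mate_in: "x \<in> V \<Longrightarrow> mate x \<in> V"
  using adjacent_mate wf_K unfolding wf_graph_def by blast

lemma mate_neq: "x \<in> V \<Longrightarrow> mate x \<noteq> x"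
  using adjacent_mate wf_K unfolding wf_graph_def by fastforce

lemma mate_mate [simp]: "x \<in> V \<Longrightarrow> mate (mate x) = x"
  using in_matching_iff[OF mate_in, of x x] mate_in_matching[of x] by (simp add: insert_commute)

lemma mate_eq_iff: "x \<in> V \<Longrightarrow> y \<in> V \<Longrightarrow> mate x = y \<longleftrightarrow> x = mate y"
  by (metis mate_mate)

lemma mate_inj_iff: "x \<in> V \<Longrightarrow> y \<in> V \<Longrightarrow> mate x = mate y \<longleftrightarrow> x = y"
  by (metis mate_mate)

lemma adjacent_minus_iff:
  "x \<in> V \<Longrightarrow> y \<in> V \<Longrightarrow> {x, y} \<in> snd (graph_minus K M) \<longleftrightarrow> {x, y} \<in> snd K \<and> y \<noteq> mate x"
  using in_matching_iff[of x y] unfolding graph_minus_def by simp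

lemma minus_edgeE:
  assumes "e \<in> snd (graph_minus K M)"
  obtains x y where "e = {x, y}" "x \<in> V" "y \<in> V" "{x, y} \<in> snd K" "y \<noteq> mate x"
proof -
  have "fst (graph_minus K M) = V" unfolding graph_minus_def by simp
  then obtain x y where "e = {x, y}" "x \<in> V" "y \<in> V"
    using wf_graph_edgeE[OF wf_graph_minus[OF wf_K] assms] by metis
  then show thesis using that assms adjacent_minus_iff by blast
qed

lemma card_neighbours_minus:
  assumes "x \<in> V"
  shows "card (neighbours (graph_minus K M) x) = card (neighbours K x) - 1"
proof -
  have "neighbours (graph_minus K M) x = neighbours K x - {mate x}"
    using in_matching_iff[OF assms] unfolding neighbours_def graph_minus_def by auto
  moreover have "mate x \<in> neighbours K x" using adjacent_mate[OF assms] unfolding neighbours_def by simp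
  ultimately show ?thesis by simp
qed

definition matching_aut :: "(nat \<Rightarrow> nat) \<Rightarrow> bool" where
  "matching_aut s \<longleftrightarrow> graph_aut K s \<and> (\<forall>x\<in>V. s (mate x) = mate (s x))"

lemma graph_aut_minus:
  assumes "matching_aut s"
  shows "graph_aut (graph_minus K M) s"
proof -
  have bij: "bij_betw s V V"
    and K: "\<And>x y. x \<in> V \<Longrightarrow> y \<in> V \<Longrightarrow> {s x, s y} \<in> snd K \<longleftrightarrow> {x, y} \<in> snd K"
    and comm: "\<And>x. x \<in> V \<Longrightarrow> s (mate x) = mate (s x)"
    using assms unfolding matching_aut_def graph_aut_def by simp_all
  have adj: "{s x, s y} \<in> snd (graph_minus K M) \<longleftrightarrow> {x, y} \<in> snd (graph_minus K M)"
    if "x \<in> V" "y \<in> V" for x y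
  proof -
    have "s y = s (mate x) \<longleftrightarrow> y = mate x"
      using bij_betw_imp_inj_on[OF bij] that(2) mate_in[OF that(1)] by (rule inj_on_eq_iff)
    then have "s y = mate (s x) \<longleftrightarrow> y = mate x" using comm[OF that(1)] by simp
    moreover have "s x \<in> V" "s y \<in> V" using bij_betw_apply[OF bij] that by auto
    ultimately show ?thesis
      using adjacent_minus_iff[OF \<open>s x \<in> V\<close> \<open>s y \<in> V\<close>] adjacent_minus_iff[OF that] K[OF that] by simp
  qed
  have "fst (graph_minus K M) = V" by (simp add: graph_minus_def)
  then show ?thesis unfolding graph_aut_def using bij adj by simp
qed

lemma matching_aut_id: "matching_aut id"
  unfolding matching_aut_def graph_aut_def by simp

lemma matching_aut_comp:
  assumes "matching_aut s" "matching_aut t"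
  shows "matching_aut (t \<circ> s)"
proof -
  have "bij_betw s V V" using assms(1) unfolding matching_aut_def graph_aut_def by simp
  then have "s x \<in> V" if "x \<in> V" for x using bij_betw_apply that by metis
  then show ?thesis
    using assms bij_betw_trans[OF \<open>bij_betw s V V\<close>] unfolding matching_aut_def graph_aut_def by auto
qed

lemma transpose_mate_commute:
  assumes "x \<in> V" "z \<in> V"
  shows "transpose x (mate x) (mate z) = mate (transpose x (mate x) z)"
  using assms by (auto simp: transpose_def mate_eq_iff mate_inj_iff)

lemma double_transpose_mate_commute:
  assumes "x \<in> V" "y \<in> V" "y \<noteq> x" "y \<noteq> mate x" "z \<in> V"
  shows "(transpose x y \<circ> transpose (mate x) (mate y)) (mate z)
    = mate ((transpose x y \<circ> transpose (mate x) (mate y)) z)"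
  using assms mate_neq by (auto simp: transpose_def mate_eq_iff mate_inj_iff)

lemma matching_autD:
  assumes "matching_aut s" "x \<in> V"
  shows "s x \<in> V" "s (mate x) = mate (s x)" "y \<in> V \<Longrightarrow> s x = s y \<longleftrightarrow> x = y"
proof -
  have bij: "bij_betw s V V" using assms(1) unfolding matching_aut_def graph_aut_def by simp
  show "s x \<in> V" using bij_betw_apply[OF bij assms(2)] .
  show "y \<in> V \<Longrightarrow> s x = s y \<longleftrightarrow> x = y"
    using inj_on_eq_iff[OF bij_betw_imp_inj_on[OF bij] assms(2)] .
  show "s (mate x) = mate (s x)" using assms unfolding matching_aut_def by simp
qed

definition rewire :: "nat \<Rightarrow> nat \<Rightarrow> graph" where
  "rewire a b = (V, insert {a, mate a} (snd (graph_minus K M) - {{a, b}}))"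

context
  fixes a b :: nat
  assumes a: "a \<in> V" and b: "b \<in> V" and ab: "{a, b} \<in> snd (graph_minus K M)"
    and transpose_aut: "graph_aut K (transpose a (mate b))"
begin

lemma edge_ab: "{a, b} \<in> snd K" "b \<noteq> mate a" "b \<noteq> a"
proof -
  show "{a, b} \<in> snd K" "b \<noteq> mate a" using ab adjacent_minus_iff[OF a b] by simp_all
  show "b \<noteq> a" using \<open>{a, b} \<in> snd K\<close> wf_K unfolding wf_graph_def by fastforce
qed

lemma mate_edge_in_minus: "{mate a, mate b} \<in> snd (graph_minus K M)"
proof -
  have "mate a \<noteq> mate b" using edge_ab a b by (metis mate_mate)
  then have "transpose a (mate b) (mate a) = mate a" using mate_neq[OF a] by simp
  then have "{mate a, mate b} \<in> snd K \<longleftrightarrow> {mate a, a} \<in> snd K"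
    using transpose_aut a mate_in[OF a] unfolding graph_aut_def by (metis transpose_apply_first)
  then have "{mate a, mate b} \<in> snd K" using adjacent_mate[OF a] by (simp add: insert_commute)
  moreover have "mate b \<noteq> mate (mate a)" using edge_ab a b by (metis mate_mate)
  ultimately show ?thesis using adjacent_minus_iff mate_in a b by blast
qed

lemma wf_rewire: "wf_graph (rewire a b)"
  using wf_graph_minus[OF wf_K] mate_in[OF a] mate_neq[OF a] a
  unfolding rewire_def wf_graph_def graph_minus_def by auto

lemma rewire_delete_new: "edge_delete (rewire a b) {a, mate a} = edge_delete (graph_minus K M) {a, b}"
proof -
  have "{a, mate a} \<notin> snd (graph_minus K M)" using adjacent_minus_iff a mate_in by simp
  then show ?thesis unfolding rewire_def edge_delete_def graph_minus_def by auto
qed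

lemma rewire_delete_mate_edge:
  "graph_iso (edge_delete (rewire a b) {mate a, mate b}) (edge_delete (graph_minus K M) {a, b})"
proof -
  \<comment> \<open>\<open>\<sigma>\<close> is an automorphism of \<open>K\<close> mapping \<open>M \<union> {ab}\<close> onto \<open>(M - {aa'}) \<union> {ab, a'b'}\<close>,
    the set of \<open>K\<close>-edges missing from \<open>rewire a b - a'b'\<close>.\<close>
  define \<sigma> where "\<sigma> = transpose a (mate b)"
  have V_minus: "fst (edge_delete (graph_minus K M) {a, b}) = V"
    and V_rewire: "fst (edge_delete (rewire a b) {mate a, mate b}) = V"
    unfolding edge_delete_def graph_minus_def rewire_def by simp_all
  have bij: "bij_betw \<sigma> V V" and K: "\<And>x y. x \<in> V \<Longrightarrow> y \<in> V \<Longrightarrow> {\<sigma> x, \<sigma> y} \<in> snd K \<longleftrightarrow> {x, y} \<in> snd K"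
    using transpose_aut unfolding \<sigma>_def graph_aut_def by simp_all
  have "graph_iso (edge_delete (graph_minus K M) {a, b}) (edge_delete (rewire a b) {mate a, mate b})"
  proof (rule graph_iso_by_adjacency[OF wf_graph_edge_delete wf_graph_edge_delete])
    show "wf_graph (graph_minus K M)" using wf_graph_minus[OF wf_K] .
    show "wf_graph (rewire a b)" by (rule wf_rewire)
    show "bij_betw \<sigma> (fst (edge_delete (graph_minus K M) {a, b})) (fst (edge_delete (rewire a b) {mate a, mate b}))"
      unfolding V_minus V_rewire by (rule bij)
    fix x y assume "x \<in> fst (edge_delete (graph_minus K M) {a, b})" "y \<in> fst (edge_delete (graph_minus K M) {a, b})"
    then have xy: "x \<in> V" "y \<in> V" unfolding V_minus .
    have \<sigma>xy: "\<sigma> x \<in> V" "\<sigma> y \<in> V" using bij_betw_apply[OF bij] xy by auto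
    have mates: "mate a \<in> V" "mate b \<in> V" "mate x \<in> V" "mate y \<in> V" "mate a \<noteq> a" "mate b \<noteq> b"
      "mate x \<noteq> x" "mate y \<noteq> y"
      using mate_in mate_neq a b xy by auto
    show "{\<sigma> x, \<sigma> y} \<in> snd (edge_delete (rewire a b) {mate a, mate b})
      \<longleftrightarrow> {x, y} \<in> snd (edge_delete (graph_minus K M) {a, b})"
      using adjacent_minus_iff[OF \<sigma>xy] adjacent_minus_iff[OF xy] K[OF xy] edge_ab
        mate_edge_in_minus adjacent_minus_iff[OF mates(1,2)] mates a b xy
        adjacent_mate[OF a] adjacent_mate[OF b] insert_commute[of "mate b" "mate a" "{}"]
      unfolding edge_delete_def rewire_def \<sigma>_def
      by (cases "x = a"; cases "x = mate b"; cases "y = a"; cases "y = mate b")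
        (auto simp: doubleton_eq_iff mate_eq_iff)
  qed
  then show ?thesis
    using graph_iso_sym wf_graph_edge_delete wf_graph_minus[OF wf_K] by blast
qed

lemma neighbours_rewire_mate: "neighbours (rewire a b) (mate a) = neighbours K (mate a)"
proof -
  have "{mate a, y} \<in> M \<longleftrightarrow> y = a" for y
    using in_matching_iff[OF mate_in[OF a]] a by simp
  moreover have "{mate a, y} \<noteq> {a, b}" for y
    using mate_neq[OF a] edge_ab(2) by (auto simp: doubleton_eq_iff)
  ultimately show ?thesis
    using adjacent_mate[OF a] unfolding neighbours_def rewire_def graph_minus_def
    by (auto simp: insert_commute)
qed

lemma not_iso_rewire:
  assumes "regular K"
  shows "\<not> graph_iso (rewire a b) (graph_minus K M)"
proof
  assume "graph_iso (rewire a b) (graph_minus K M)"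
  then obtain f where f: "bij_betw f (fst (rewire a b)) (fst (graph_minus K M))"
    "(\<lambda>e. f ` e) ` snd (rewire a b) = snd (graph_minus K M)"
    unfolding graph_iso_def by blast
  have V: "fst (rewire a b) = V" "fst (graph_minus K M) = V"
    unfolding rewire_def graph_minus_def by simp_all
  have fa: "f (mate a) \<in> V" using bij_betw_apply[OF f(1)] mate_in[OF a] unfolding V by simp
  have "card (neighbours K (mate a)) = card (neighbours (graph_minus K M) (f (mate a)))"
    using graph_iso_card_neighbours[OF wf_rewire wf_graph_minus[OF wf_K] f] mate_in[OF a]
      neighbours_rewire_mate unfolding V by simp
  also have "\<dots> = card (neighbours K (f (mate a))) - 1"
    using card_neighbours_minus[OF fa] .
  also have "\<dots> = card (neighbours K (mate a)) - 1"
    using assms fa mate_in[OF a] unfolding regular_def by metis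
  finally have "card (neighbours K (mate a)) = 0" by simp
  moreover have "a \<in> neighbours K (mate a)"
    using adjacent_mate[OF a] unfolding neighbours_def by (simp add: insert_commute)
  ultimately show False using finite_neighbours[OF wf_K] by (metis card_0_eq empty_iff)
qed

lemma edge_cards_iso:
  assumes edge_transitive: "\<And>e. e \<in> snd (graph_minus K M) \<Longrightarrow> \<exists>s. matching_aut s \<and> e = {s a, s b}"
    and G: "wf_graph G" "graph_iso G (graph_minus K M)" and e: "e \<in> snd G"
  shows "graph_iso (edge_delete G e) (edge_delete (graph_minus K M) {a, b})"
proof -
  let ?G0 = "graph_minus K M"
  obtain f where f: "bij_betw f (fst G) (fst ?G0)" "(\<lambda>e. f ` e) ` snd G = snd ?G0"
    using G(2) unfolding graph_iso_def by blast
  have "f ` e \<in> snd ?G0" using e f(2) by blast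
  then obtain s where s: "matching_aut s" "f ` e = {s a, s b}"
    using edge_transitive by blast
  have card_e: "graph_iso (edge_delete G e) (edge_delete ?G0 {s a, s b})"
    using graph_iso_edge_delete[OF G(1) f e] s(2) by simp
  have "graph_iso (edge_delete ?G0 {a, b}) (edge_delete ?G0 {s a, s b})"
    using graph_aut_edge_delete[OF wf_graph_minus[OF wf_K] graph_aut_minus[OF s(1)]] a b
    unfolding graph_minus_def by simp
  then show ?thesis
    using graph_iso_trans[OF card_e graph_iso_sym[OF wf_graph_edge_delete[OF wf_graph_minus[OF wf_K]]]]
    by simp
qed

lemma rewire_is_blocker:
  assumes "regular K" and G: "graph_iso G (graph_minus K M)"
  shows "is_blocker G (replicate_mset 2 (iso_class (edge_delete (graph_minus K M) {a, b}))) (rewire a b)"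
  unfolding is_blocker_def
proof (intro conjI)
  show "wf_graph (rewire a b)" by (rule wf_rewire)
  show "\<not> graph_iso (rewire a b) G"
  proof
    assume "graph_iso (rewire a b) G"
    then have "graph_iso (rewire a b) (graph_minus K M)" using G by (rule graph_iso_trans)
    with not_iso_rewire[OF assms(1)] show False by blast
  qed
  have "{a, mate a} \<noteq> {mate a, mate b}"
    using edge_ab(2) a b by (auto simp: doubleton_eq_iff mate_eq_iff)
  moreover have "{a, mate a} \<in> snd (rewire a b)" "{mate a, mate b} \<in> snd (rewire a b)"
    using mate_edge_in_minus mate_neq[OF a] unfolding rewire_def by (auto simp: doubleton_eq_iff)
  ultimately show "replicate_mset 2 (iso_class (edge_delete (graph_minus K M) {a, b}))
      \<subseteq># edge_deck (rewire a b)"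
    by (rule replicate_subseteq_edge_deck[OF wf_rewire wf_graph_edge_delete[OF wf_graph_minus[OF wf_K]]])
      (simp_all add: rewire_delete_new rewire_delete_mate_edge graph_iso_refl)
qed

lemma three_le_ern:
  assumes "regular K"
    and "\<And>e. e \<in> snd (graph_minus K M) \<Longrightarrow> \<exists>s. matching_aut s \<and> e = {s a, s b}"
    and G: "wf_graph G" "graph_iso G (graph_minus K M)" "edge_reconstructable G"
  shows "3 \<le> ern G"
  using three_le_ern_if_pair_blocked[OF G(1,3) wf_graph_edge_delete[OF wf_graph_minus[OF wf_K]]
      edge_cards_iso[OF assms(2) G(1,2)] rewire_is_blocker[OF assms(1) G(2)]] .

end

end

section \<open>Complete graphs\<close>

lemma adjacent_complete_graph_iff:
  "x \<in> V \<Longrightarrow> y \<in> V \<Longrightarrow> {x, y} \<in> snd (complete_graph V) \<longleftrightarrow> x \<noteq> y"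
  unfolding complete_graph_def by (auto simp: card_insert_if)

lemma wf_complete_graph: "finite V \<Longrightarrow> wf_graph (complete_graph V)"
  unfolding wf_graph_def complete_graph_def by simp

lemma regular_complete_graph: "regular (complete_graph V)"
proof -
  have "neighbours (complete_graph V) x = V - {x}" if "x \<in> V" for x
    using that adjacent_complete_graph_iff unfolding neighbours_def complete_graph_def
    by (auto simp: card_insert_if)
  then show ?thesis unfolding regular_def complete_graph_def by (simp add: card_Diff_singleton)
qed

lemma graph_aut_complete_graph:
  assumes "bij_betw s V V"
  shows "graph_aut (complete_graph V) s"
proof -
  have "{s x, s y} \<in> snd (complete_graph V) \<longleftrightarrow> {x, y} \<in> snd (complete_graph V)" if "x \<in> V" "y \<in> V" for x y
    using adjacent_complete_graph_iff that bij_betw_apply[OF assms]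
      inj_on_eq_iff[OF bij_betw_imp_inj_on[OF assms]] by simp
  moreover have "fst (complete_graph V) = V" unfolding complete_graph_def by simp
  ultimately show ?thesis using assms unfolding graph_aut_def by simp
qed

context matching_complement
begin

context
  assumes complete: "K = complete_graph V"
begin

lemma matching_aut_if_complete:
  assumes "bij_betw s V V" "\<And>z. z \<in> V \<Longrightarrow> s (mate z) = mate (s z)"
  shows "matching_aut s"
proof -
  have "graph_aut K s" by (subst complete) (rule graph_aut_complete_graph[OF assms(1)])
  then show ?thesis using assms(2) unfolding matching_aut_def by simp
qed

lemma matching_aut_transpose_mate: "x \<in> V \<Longrightarrow> matching_aut (transpose x (mate x))"
  using matching_aut_if_complete transpose_mate_commute mate_in by simp

lemma matching_aut_double_transpose_complete:
  assumes "x \<in> V" "y \<in> V" "y \<noteq> x" "y \<noteq> mate x"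
  shows "matching_aut (transpose x y \<circ> transpose (mate x) (mate y))"
  using matching_aut_if_complete double_transpose_mate_commute[OF assms] assms mate_in
    bij_betw_trans[of "transpose (mate x) (mate y)" V V "transpose x y"] by simp

lemma matching_aut_moving_complete:
  assumes "a \<in> V" "c \<in> V"
  shows "\<exists>s. matching_aut s \<and> s a = c"
proof -
  consider "c = a" | "c = mate a" | "c \<noteq> a" "c \<noteq> mate a" by blast
  then show ?thesis
  proof cases
    case 1 then show ?thesis using matching_aut_id by auto
  next
    case 2 then show ?thesis using matching_aut_transpose_mate[OF assms(1)] by auto
  next
    case 3
    have "a \<noteq> mate a" "a \<noteq> mate c" using mate_neq assms 3(2) by (auto simp: mate_eq_iff)
    then show ?thesis using matching_aut_double_transpose_complete[OF assms 3] by auto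
  qed
qed

lemma matching_aut_fixing_complete:
  assumes "c \<in> V" "w \<in> V" "d \<in> V" "w \<noteq> c" "w \<noteq> mate c" "d \<noteq> c" "d \<noteq> mate c"
  shows "\<exists>t. matching_aut t \<and> t c = c \<and> t w = d"
proof -
  consider "d = w" | "d = mate w" | "d \<noteq> w" "d \<noteq> mate w" by blast
  then show ?thesis
  proof cases
    case 1 then show ?thesis using matching_aut_id by auto
  next
    case 2
    have "c \<noteq> w" "c \<noteq> mate w" using assms by (auto simp: mate_eq_iff)
    then show ?thesis using matching_aut_transpose_mate[OF assms(2)] 2 by auto
  next
    case 3
    have "c \<notin> {w, d, mate w, mate d}" "w \<noteq> mate w" "w \<noteq> mate d"
      using assms mate_neq 3 by (auto simp: mate_eq_iff)
    then show ?thesis using matching_aut_double_transpose_complete[OF assms(2,3) 3] by auto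
  qed
qed

lemma matching_aut_exists_complete:
  assumes ab: "a \<in> V" "b \<in> V" "b \<noteq> a" "b \<noteq> mate a"
    and cd: "c \<in> V" "d \<in> V" "d \<noteq> c" "d \<noteq> mate c"
  shows "\<exists>s. matching_aut s \<and> s a = c \<and> s b = d"
proof -
  obtain s where s: "matching_aut s" "s a = c" using matching_aut_moving_complete[OF ab(1) cd(1)] by blast
  have w: "s b \<in> V" "s b \<noteq> c" "s b \<noteq> mate c"
    using matching_autD[OF s(1)] ab cd s(2) mate_in by metis+
  obtain t where t: "matching_aut t" "t c = c" "t (s b) = d"
    using matching_aut_fixing_complete[OF cd(1) w(1) cd(2) w(2,3) cd(3,4)] by blast
  show ?thesis using matching_aut_comp[OF s(1) t(1)] s t by auto
qed

lemma edge_transitive_complete: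
  assumes "a \<in> V" "b \<in> V" "b \<noteq> a" "b \<noteq> mate a" and e: "e \<in> snd (graph_minus K M)"
  shows "\<exists>s. matching_aut s \<and> e = {s a, s b}"
proof -
  obtain c d where cd: "e = {c, d}" "c \<in> V" "d \<in> V" "{c, d} \<in> snd K" "d \<noteq> mate c"
    using e by (rule minus_edgeE)
  have "snd K = snd (complete_graph V)" using complete by (rule arg_cong)
  then have "d \<noteq> c" using adjacent_complete_graph_iff[OF cd(2,3)] cd(4) by simp
  then show ?thesis using matching_aut_exists_complete[OF assms(1-4) cd(2,3)] cd(1,5) by blast
qed

end

end

lemma three_le_ern_complete_minus_matching:
  assumes X: "finite X" "3 \<le> card X" and M: "perfect_matching (complete_graph X) M"
    and G: "wf_graph G" "graph_iso G (graph_minus (complete_graph X) M)" "edge_reconstructable G"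
  shows "3 \<le> ern G"
proof -
  interpret matching_complement "complete_graph X" M
    using wf_complete_graph[OF X(1)] M by unfold_locales
  have V: "fst (complete_graph X) = X" by (simp add: complete_graph_def)
  obtain a where a: "a \<in> X" using X(2) by (metis card.empty ex_in_conv not_numeral_le_zero)
  have "card {a, mate a} \<le> 2" by (simp add: card_insert_if)
  then have "card (X - {a, mate a}) \<noteq> 0"
    using X a mate_in[of a] card_Diff_subset[of "{a, mate a}" X] unfolding V by simp
  then obtain b where b: "b \<in> X" "b \<noteq> a" "b \<noteq> mate a" by (metis card.empty ex_in_conv Diff_iff insertCI)
  show ?thesis
  proof (rule three_le_ern[unfolded V, OF a b(1) _ _ regular_complete_graph _ G])
    show "{a, b} \<in> snd (graph_minus (complete_graph X) M)"
      using adjacent_minus_iff[unfolded V, OF a b(1)] adjacent_complete_graph_iff a b by simp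
    show "graph_aut (complete_graph X) (transpose a (mate b))"
      using a b(1) mate_in unfolding V by (intro graph_aut_complete_graph) simp
    show "\<exists>s. matching_aut s \<and> e = {s a, s b}" if "e \<in> snd (graph_minus (complete_graph X) M)" for e
      using edge_transitive_complete[unfolded V, OF refl a b that] .
  qed
qed

section \<open>Complete bipartite graphs\<close>

lemma adjacent_complete_bipartite_iff:
  assumes "x < 2 * n" "y < 2 * n"
  shows "{x, y} \<in> snd (complete_bipartite n) \<longleftrightarrow> (x < n \<longleftrightarrow> \<not> y < n)"
proof
  assume "{x, y} \<in> snd (complete_bipartite n)"
  then show "x < n \<longleftrightarrow> \<not> y < n"
    unfolding complete_bipartite_def by (auto simp: doubleton_eq_iff)
next
  assume "x < n \<longleftrightarrow> \<not> y < n"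
  then have "{x, y} = {min x y, max x y} \<and> min x y < n \<and> n \<le> max x y \<and> max x y < 2 * n"
    using assms by (auto simp: min_def max_def insert_commute)
  then show "{x, y} \<in> snd (complete_bipartite n)"
    unfolding complete_bipartite_def snd_conv by blast
qed

lemma wf_complete_bipartite: "wf_graph (complete_bipartite n)"
  unfolding wf_graph_def complete_bipartite_def by auto

lemma regular_complete_bipartite: "regular (complete_bipartite n)"
proof -
  have "neighbours (complete_bipartite n) x = (if x < n then {n..<2 * n} else {0..<n})"
    if "x < 2 * n" for x
    using that adjacent_complete_bipartite_iff wf_complete_bipartite
    unfolding neighbours_def wf_graph_def complete_bipartite_def
    by (auto simp: doubleton_eq_iff)
  then show ?thesis unfolding regular_def complete_bipartite_def by simp
qed

lemma graph_aut_complete_bipartite: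
  assumes "bij_betw s {0..<2 * n} {0..<2 * n}" and "\<And>x. x < 2 * n \<Longrightarrow> s x < n \<longleftrightarrow> x < n"
  shows "graph_aut (complete_bipartite n) s"
proof -
  have "{s x, s y} \<in> snd (complete_bipartite n) \<longleftrightarrow> {x, y} \<in> snd (complete_bipartite n)"
    if "x < 2 * n" "y < 2 * n" for x y
    using adjacent_complete_bipartite_iff that bij_betw_apply[OF assms(1)] assms(2) by simp
  moreover have "fst (complete_bipartite n) = {0..<2 * n}" unfolding complete_bipartite_def by simp
  ultimately show ?thesis using assms(1) unfolding graph_aut_def by simp
qed

lemma transpose_side: "(u < n \<longleftrightarrow> v < n) \<Longrightarrow> transpose u v z < n \<longleftrightarrow> z < n"
  by (auto simp: transpose_def)

context matching_complement
begin

context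
  fixes n :: nat
  assumes bipartite: "K = complete_bipartite n"
begin

lemma vertices_bipartite: "V = {0..<2 * n}"
  by (subst bipartite) (simp add: complete_bipartite_def)

lemma adjacent_bipartite_iff: "x \<in> V \<Longrightarrow> y \<in> V \<Longrightarrow> {x, y} \<in> snd K \<longleftrightarrow> (x < n \<longleftrightarrow> \<not> y < n)"
  using adjacent_complete_bipartite_iff unfolding vertices_bipartite by (simp add: bipartite)

lemma mate_side: "x \<in> V \<Longrightarrow> mate x < n \<longleftrightarrow> \<not> x < n"
  using adjacent_bipartite_iff[OF _ mate_in] adjacent_mate by simp

lemma matching_aut_double_transpose_bipartite:
  assumes "x \<in> V" "y \<in> V" "y \<noteq> x" "x < n \<longleftrightarrow> y < n"
  shows "matching_aut (transpose x y \<circ> transpose (mate x) (mate y))"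
proof -
  have y: "y \<noteq> mate x" using mate_side assms by auto
  have "(transpose x y \<circ> transpose (mate x) (mate y)) z < n \<longleftrightarrow> z < n" for z
    using transpose_side[of x n y] transpose_side[of "mate x" n "mate y"] assms(4)
      mate_side[OF assms(1)] mate_side[OF assms(2)] by simp
  moreover have "bij_betw (transpose x y \<circ> transpose (mate x) (mate y)) V V"
    using assms mate_in bij_betw_trans[of "transpose (mate x) (mate y)" V V "transpose x y"] by simp
  ultimately have "graph_aut (complete_bipartite n) (transpose x y \<circ> transpose (mate x) (mate y))"
    using vertices_bipartite by (intro graph_aut_complete_bipartite) simp_all
  then have "graph_aut K (transpose x y \<circ> transpose (mate x) (mate y))" by (simp add: bipartite)
  then show ?thesis
    using double_transpose_mate_commute[OF assms(1-3) y] unfolding matching_aut_def by simp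
qed

lemma matching_aut_moving_bipartite:
  assumes "a \<in> V" "a < n" "c \<in> V" "c < n"
  shows "\<exists>s. matching_aut s \<and> s a = c"
proof (cases "c = a")
  case True then show ?thesis using matching_aut_id by auto
next
  case False
  have "a \<noteq> mate a" "a \<noteq> mate c" using mate_side[OF assms(1)] mate_side[OF assms(3)] assms by auto
  then show ?thesis
    using matching_aut_double_transpose_bipartite[OF assms(1,3) False] assms by auto
qed

lemma matching_aut_fixing_bipartite:
  assumes "c \<in> V" "c < n" "w \<in> V" "\<not> w < n" "w \<noteq> mate c" "d \<in> V" "\<not> d < n" "d \<noteq> mate c"
  shows "\<exists>t. matching_aut t \<and> t c = c \<and> t w = d"
proof (cases "d = w")
  case True then show ?thesis using matching_aut_id by auto
next
  case False
  have "c \<notin> {w, d, mate w, mate d}" using assms by (auto simp: mate_eq_iff)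
  moreover have "w \<noteq> mate w" "w \<noteq> mate d" using mate_side[OF assms(3)] mate_side[OF assms(6)] assms by auto
  ultimately show ?thesis
    using matching_aut_double_transpose_bipartite[OF assms(3,6) False] assms by auto
qed

lemma matching_aut_exists_bipartite:
  assumes a: "a \<in> V" "a < n" and b: "b \<in> V" "\<not> b < n" "b \<noteq> mate a"
    and c: "c \<in> V" "c < n" and d: "d \<in> V" "\<not> d < n" "d \<noteq> mate c"
  shows "\<exists>s. matching_aut s \<and> s a = c \<and> s b = d"
proof -
  obtain s where s: "matching_aut s" "s a = c" using matching_aut_moving_bipartite[OF a c] by blast
  have w: "s b \<in> V" "s b \<noteq> mate c" "{c, s b} \<in> snd K"
  proof -
    show "s b \<in> V" using matching_autD(1)[OF s(1) b(1)] .
    have "mate c = s (mate a)" using matching_autD(2)[OF s(1) a(1)] s(2) by simp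
    then show "s b \<noteq> mate c" using matching_autD(3)[OF s(1) b(1) mate_in[OF a(1)]] b(3) by simp
    have "{a, b} \<in> snd K" using adjacent_bipartite_iff[OF a(1) b(1)] a(2) b(2) by simp
    then show "{c, s b} \<in> snd K"
      using s a(1) b(1) unfolding matching_aut_def graph_aut_def by auto
  qed
  have "\<not> s b < n" using adjacent_bipartite_iff[OF c(1) w(1)] w(3) c(2) by simp
  then obtain t where t: "matching_aut t" "t c = c" "t (s b) = d"
    using matching_aut_fixing_bipartite[OF c w(1) _ w(2) d] by blast
  show ?thesis using matching_aut_comp[OF s(1) t(1)] s t by auto
qed

lemma minus_edge_bipartiteE:
  assumes "e \<in> snd (graph_minus K M)"
  obtains c d where "e = {c, d}" "c \<in> V" "d \<in> V" "c < n" "\<not> d < n" "d \<noteq> mate c"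
proof -
  obtain x y where xy: "e = {x, y}" "x \<in> V" "y \<in> V" "{x, y} \<in> snd K" "y \<noteq> mate x"
    using assms by (rule minus_edgeE)
  show thesis
  proof (cases "x < n")
    case True then show thesis using that[of x y] xy adjacent_bipartite_iff[OF xy(2,3)] by simp
  next
    case False
    have "x \<noteq> mate y" using xy(5) mate_mate[OF xy(3)] by auto
    then show thesis using that[of y x] False xy adjacent_bipartite_iff[OF xy(2,3)]
      by (simp add: insert_commute)
  qed
qed

lemma edge_transitive_bipartite:
  assumes "a \<in> V" "a < n" "b \<in> V" "\<not> b < n" "b \<noteq> mate a" and e: "e \<in> snd (graph_minus K M)"
  shows "\<exists>s. matching_aut s \<and> e = {s a, s b}"
proof -
  obtain c d where "e = {c, d}" "c \<in> V" "d \<in> V" "c < n" "\<not> d < n" "d \<noteq> mate c"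
    using e by (rule minus_edge_bipartiteE)
  then show ?thesis using matching_aut_exists_bipartite[OF assms(1-5)] by blast
qed

end

end

lemma three_le_ern_complete_bipartite_minus_matching:
  assumes n: "2 \<le> n" and M: "perfect_matching (complete_bipartite n) M"
    and G: "wf_graph G" "graph_iso G (graph_minus (complete_bipartite n) M)" "edge_reconstructable G"
  shows "3 \<le> ern G"
proof -
  interpret matching_complement "complete_bipartite n" M
    using wf_complete_bipartite M by unfold_locales
  note V = vertices_bipartite[OF refl]
  define b where "b = (if mate 0 = n then Suc n else n)"
  have a: "0 \<in> V" "0 < n" using n V by auto
  have b: "b \<in> V" "\<not> b < n" "b \<noteq> mate 0" using n V unfolding b_def by auto
  show ?thesis
  proof (rule three_le_ern[OF a(1) b(1) _ _ regular_complete_bipartite _ G])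
    show "{0, b} \<in> snd (graph_minus (complete_bipartite n) M)"
      using adjacent_minus_iff[OF a(1) b(1)] adjacent_bipartite_iff[OF refl a(1) b(1)] a b by simp
    have "mate b < n" using mate_side[OF refl b(1)] b(2) by simp
    then have "transpose 0 (mate b) x < n \<longleftrightarrow> x < n" for x
      using a(2) transpose_side[of 0 n] by simp
    then show "graph_aut (complete_bipartite n) (transpose 0 (mate b))"
      using a(1) mate_in[OF b(1)] V by (intro graph_aut_complete_bipartite) simp_all
    show "\<exists>s. matching_aut s \<and> e = {s 0, s b}" if "e \<in> snd (graph_minus (complete_bipartite n) M)" for e
      using edge_transitive_bipartite[OF refl a b that] .
  qed
qed

theorem mainTheorem7:
  fixes G :: graph and n :: nat and M :: "nat set set"
  assumes "wf_graph G"
    and "(even n \<and> 4 \<le> n \<and> perfect_matching (complete_graph {0..<n}) M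
            \<and> graph_iso G (graph_minus (complete_graph {0..<n}) M))
       \<or> (3 \<le> n \<and> perfect_matching (complete_bipartite n) M
            \<and> graph_iso G (graph_minus (complete_bipartite n) M))"
    and "edge_reconstructable G"
  shows "3 \<le> ern G"
  using assms(2)
proof (elim disjE conjE)
  assume "4 \<le> n" "perfect_matching (complete_graph {0..<n}) M"
    "graph_iso G (graph_minus (complete_graph {0..<n}) M)"
  then show ?thesis
    using three_le_ern_complete_minus_matching[of "{0..<n}"] assms(1,3) by simp
next
  assume "3 \<le> n" "perfect_matching (complete_bipartite n) M"
    "graph_iso G (graph_minus (complete_bipartite n) M)"
  then show ?thesis
    using three_le_ern_complete_bipartite_minus_matching[of n M G] assms(1,3) by simp
qed

end
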